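(* Let $n,d\in\mathbb{N}$ with $d\ge 1$, and let $\mathbf{X}=\{\mathbf{x}_1,\dots,\mathbf{x}_m\}\subseteq\mathbb{B}^n$ be any dataset in which every example has at least $d+1$ nonzero entries, i.e. $\langle\mathbf{x}_i,\mathbf{x}_i\rangle\ge d+1$ for all $i$. Let $\tilde{\mathbf{K}}^{(d)}$ and $\tilde{\mathbf{K}}^{(d+1)}$ be the $m\times m$ matrices with entries $\tilde\kappa_\wedge^d(\mathbf{x}_i,\mathbf{x}_j)$ and $\tilde\kappa_\wedge^{d+1}(\mathbf{x}_i,\mathbf{x}_j)$. Then $\tilde\kappa_\wedge^d(\mathbf{x}_i,\mathbf{x}_j)^2\ge\tilde\kappa_\wedge^{d+1}(\mathbf{x}_i,\mathbf{x}_j)^2$ for all $i,j$, and consequently $\mathcal{C}(\tilde{\mathbf{K}}^{(d)})\le\mathcal{C}(\tilde{\mathbf{K}}^{(d+1)})$. In other words, $\tilde\kappa_\wedge^d$ is more general than $\tilde\kappa_\wedge^{d+1}$.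
   Context: $\mathbb{B}=\{0,1\}$. For $\mathbf{x},\mathbf{z}\in\mathbb{B}^n$, $\langle\mathbf{x},\mathbf{z}\rangle=\sum_i x_iz_i$. The Conjunctive kernel (C-Kernel) of arity $d$ is $\kappa_\wedge^d(\mathbf{x},\mathbf{z})=\binom{\langle\mathbf{x},\mathbf{z}\rangle}{d}$; equivalently it is the inner product of the feature maps $\phi_\wedge^d(\mathbf{x})=(\prod_{i=1}^n x_i^{b_i})_{\mathbf{b}\in\mathbb{B}_d}$, where $\mathbb{B}_d=\{\mathbf{b}\in\mathbb{B}^n:\|\mathbf{b}\|_1=d\}$ (each feature is the conjunction of the $d$ variables selected by $\mathbf{b}$). For a kernel $\kappa$, its normalized version is $\tilde\kappa(\mathbf{x},\mathbf{z})=\kappa(\mathbf{x},\mathbf{z})/\sqrt{\kappa(\mathbf{x},\mathbf{x})\kappa(\mathbf{z},\mathbf{z})}$ (defined when $\kappa(\mathbf{x},\mathbf{x}),\kappa(\mathbf{z},\mathbf{z})>0$). The spectral ratio of a positive semidefinite matrix $\mathbf{K}\in\mathbb{R}^{m\times m}$ is $\mathcal{C}(\mathbf{K})=\|\mathbf{K}\|_T/\|\mathbf{K}\|_F=\sum_i\mathbf{K}_{ii}/\sqrt{\sum_{i,j}\mathbf{K}_{ij}^2}$. A kernel $\kappa_1$ is said to be more general than $\kappa_2$ if $\mathcal{C}(\mathbf{K}^{(1)}_{\mathbf{X}})\le\mathcal{C}(\mathbf{K}^{(2)}_{\mathbf{X}})$ for the kernel matrices on the datasets under consideration. *)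

theory Defs
  imports Complex_Main
begin

text \<open>Binary vectors in B^n are represented as functions nat => nat whose
  values on the index set {0..<n} lie in {0,1}.\<close>
definition is_binvec :: "nat \<Rightarrow> (nat \<Rightarrow> nat) \<Rightarrow> bool" where
  "is_binvec n x \<longleftrightarrow> (\<forall>i<n. x i \<in> {0, 1})"

definition binner :: "nat \<Rightarrow> (nat \<Rightarrow> nat) \<Rightarrow> (nat \<Rightarrow> nat) \<Rightarrow> nat" where
  "binner n x z = (\<Sum>i<n. x i * z i)"

definition ckernel :: "nat \<Rightarrow> nat \<Rightarrow> (nat \<Rightarrow> nat) \<Rightarrow> (nat \<Rightarrow> nat) \<Rightarrow> real" where
  "ckernel n d x z = real (binner n x z choose d)"

definition normalized_kernel :: "('a \<Rightarrow> 'a \<Rightarrow> real) \<Rightarrow> 'a \<Rightarrow> 'a \<Rightarrow> real" where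
  "normalized_kernel k x z = k x z / sqrt (k x x * k z z)"

text \<open>Spectral ratio of an m x m matrix (given by its entries K i j, i,j < m):
  trace norm (= trace for PSD) divided by Frobenius norm.\<close>
definition spectral_ratio :: "nat \<Rightarrow> (nat \<Rightarrow> nat \<Rightarrow> real) \<Rightarrow> real" where
  "spectral_ratio m K = (\<Sum>i<m. K i i) / sqrt (\<Sum>i<m. \<Sum>j<m. (K i j)^2)"

end

theory Submission imports Defs begin

text \<open>For binary vectors the normalized C-kernel only depends on the three
  counts \<open>c = \<langle>x,z\<rangle>\<close>, \<open>a = \<langle>x,x\<rangle>\<close>, \<open>b = \<langle>z,z\<rangle>\<close>, with \<open>c \<le> a\<close> and \<open>c \<le> b\<close>. Since
  \<open>C(k, d+1) = C(k, d) (k - d) / (d + 1)\<close>, passing from arity \<open>d\<close> to \<open>d + 1\<close> multiplies the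
  squared normalized kernel by \<open>(c - d)\<^sup>2 / ((a - d)(b - d)) \<le> 1\<close>. Both normalized kernel
  matrices have unit diagonal, so their traces agree, while the Frobenius norm can only
  shrink when the arity grows; hence the spectral ratio can only grow.\<close>

lemma binomial_Suc_eq_real:
  "real (n choose Suc d) = real (n - d) * real (n choose d) / real (Suc d)"
proof -
  have "Suc d * (n choose Suc d) = (n - d) * (n choose d)"
    by (simp only: binomial_absorption binomial_absorb_comp)
  then have "real (Suc d) * real (n choose Suc d) = real (n - d) * real (n choose d)"
    by (metis of_nat_mult)
  then show ?thesis
    by (simp add: eq_divide_eq mult.commute)
qed

lemma normalized_binomial_Suc_sq_le:
  fixes a b c d :: nat
  assumes "c \<le> a" "c \<le> b" "d < a" "d < b"
  shows "(real (c choose Suc d) / sqrt (real (a choose Suc d) * real (b choose Suc d)))\<^sup>2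
       \<le> (real (c choose d) / sqrt (real (a choose d) * real (b choose d)))\<^sup>2"
proof -
  define A B C k p q r where "A = real (a choose d)" "B = real (b choose d)"
    "C = real (c choose d)" "k = real (Suc d)"
    "p = real (a - d)" "q = real (b - d)" "r = real (c - d)"
  note defs = A_B_C_k_p_q_r_def
  have pos: "A > 0" "B > 0" "k > 0" "p > 0" "q > 0"
    unfolding defs using assms by auto
  have "r * r \<le> p * q"
    unfolding defs using assms by (intro mult_mono) auto
  then have ratio_le_1: "r * r / (p * q) \<le> 1"
    using pos by simp
  have "(real (c choose Suc d) / sqrt (real (a choose Suc d) * real (b choose Suc d)))\<^sup>2
      = (r * C / k)\<^sup>2 / ((p * A / k) * (q * B / k))"
    unfolding binomial_Suc_eq_real defs[symmetric] power_divide
    using pos by simp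
  also have "\<dots> = C\<^sup>2 / (A * B) * (r * r / (p * q))"
    using pos by (simp add: field_simps power2_eq_square)
  also have "\<dots> \<le> C\<^sup>2 / (A * B)"
    using ratio_le_1 pos by (intro mult_left_le) auto
  also have "\<dots> = (real (c choose d) / sqrt (real (a choose d) * real (b choose d)))\<^sup>2"
    using pos by (simp add: power_divide flip: defs)
  finally show ?thesis .
qed

lemma binner_commute: "binner n x z = binner n z x"
  unfolding binner_def by (simp add: mult.commute)

lemma binner_le_binner_self:
  assumes "is_binvec n x" "is_binvec n z"
  shows "binner n x z \<le> binner n x x"
  unfolding binner_def
proof (rule sum_mono)
  fix i assume "i \<in> {..<n}"
  then have "x i \<in> {0, 1}" "z i \<in> {0, 1}"
    using assms unfolding is_binvec_def by auto
  then show "x i * z i \<le> x i * x i" by auto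
qed

lemma normalized_ckernel_eq:
  "normalized_kernel (ckernel n d) x z =
     real (binner n x z choose d) / sqrt (real (binner n x x choose d) * real (binner n z z choose d))"
  unfolding normalized_kernel_def ckernel_def by simp

lemma normalized_ckernel_self:
  assumes "d \<le> binner n x x"
  shows "normalized_kernel (ckernel n d) x x = 1"
  using assms by (simp add: normalized_ckernel_eq)

lemma normalized_ckernel_Suc_sq_le:
  assumes "is_binvec n x" "is_binvec n z" "d < binner n x x" "d < binner n z z"
  shows "(normalized_kernel (ckernel n (Suc d)) x z)\<^sup>2 \<le> (normalized_kernel (ckernel n d) x z)\<^sup>2"
  unfolding normalized_ckernel_eq
  using assms binner_le_binner_self[OF assms(1,2)] binner_le_binner_self[OF assms(2,1)]
  by (intro normalized_binomial_Suc_sq_le) (auto simp: binner_commute)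

lemma spectral_ratio_mono:
  fixes K L :: "nat \<Rightarrow> nat \<Rightarrow> real"
  assumes diag_eq: "\<And>i. i < m \<Longrightarrow> K i i = L i i"
    and diag_nonneg: "\<And>i. i < m \<Longrightarrow> L i i \<ge> 0"
    and sq_le: "\<And>i j. i < m \<Longrightarrow> j < m \<Longrightarrow> (L i j)\<^sup>2 \<le> (K i j)\<^sup>2"
  shows "spectral_ratio m K \<le> spectral_ratio m L"
proof -
  define FK FL where "FK = (\<Sum>i<m. \<Sum>j<m. (K i j)\<^sup>2)" and "FL = (\<Sum>i<m. \<Sum>j<m. (L i j)\<^sup>2)"
  have trace_eq: "(\<Sum>i<m. K i i) = (\<Sum>i<m. L i i)"
    using diag_eq by simp
  have trace_nonneg: "(\<Sum>i<m. L i i) \<ge> 0"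
    using diag_nonneg by (intro sum_nonneg) auto
  have "FL \<le> FK"
    unfolding FK_def FL_def using sq_le by (intro sum_mono) auto
  show ?thesis
  proof (cases "FL = 0")
    case True
    have "L i j = 0" if "i < m" "j < m" for i j
      using True that unfolding FK_def FL_def
      by (simp add: sum_nonneg_eq_0_iff sum_nonneg)
    then have "(\<Sum>i<m. L i i) = 0" by simp
    then show ?thesis
      unfolding spectral_ratio_def by (simp add: trace_eq)
  next
    case False
    then have "FL > 0"
      unfolding FK_def FL_def by (simp add: order_le_neq_trans sum_nonneg)
    then show ?thesis
      using \<open>FL \<le> FK\<close> trace_nonneg
      unfolding spectral_ratio_def trace_eq FK_def[symmetric] FL_def[symmetric]
      by (intro divide_left_mono) auto
  qed
qed

theorem mainTheorem1:
  fixes n d m :: nat and X :: "nat \<Rightarrow> (nat \<Rightarrow> nat)"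
  assumes "d \<ge> 1"
    and "\<And>i. i < m \<Longrightarrow> is_binvec n (X i)"
    and "\<And>i. i < m \<Longrightarrow> binner n (X i) (X i) \<ge> d + 1"
  shows "(\<forall>i<m. \<forall>j<m.
            (normalized_kernel (ckernel n d) (X i) (X j))^2
              \<ge> (normalized_kernel (ckernel n (d + 1)) (X i) (X j))^2)
       \<and> spectral_ratio m (\<lambda>i j. normalized_kernel (ckernel n d) (X i) (X j))
           \<le> spectral_ratio m (\<lambda>i j. normalized_kernel (ckernel n (d + 1)) (X i) (X j))"
proof -
  have sq_le: "(normalized_kernel (ckernel n (d + 1)) (X i) (X j))\<^sup>2
             \<le> (normalized_kernel (ckernel n d) (X i) (X j))\<^sup>2" if "i < m" "j < m" for i j
    using normalized_ckernel_Suc_sq_le assms(2,3) that by (simp add: Suc_le_eq)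
  have "normalized_kernel (ckernel n d) (X i) (X i) = 1"
    and "normalized_kernel (ckernel n (d + 1)) (X i) (X i) = 1" if "i < m" for i
    using normalized_ckernel_self assms(3)[OF that] by simp_all
  then have "spectral_ratio m (\<lambda>i j. normalized_kernel (ckernel n d) (X i) (X j))
           \<le> spectral_ratio m (\<lambda>i j. normalized_kernel (ckernel n (d + 1)) (X i) (X j))"
    using sq_le by (intro spectral_ratio_mono) auto
  then show ?thesis
    using sq_le by blast
qed

end
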